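(* Let $G \leq \mathrm{Aut}(K_{n,n})$ be a subgroup isomorphic to $A_4$. Suppose there is an embedding $\Gamma$ of $K_{n,n}$ in $S^3$ such that $G$ is induced on $\Gamma$ by an isomorphic subgroup $\widehat{G} \leq \mathrm{SO}(4)$. Let $n_2^v$ and $n_2^w$ denote the number of vertices of $V$, respectively of $W$, fixed by an element of order 2 of $G$ (these numbers are the same for all elements of order 2 of $G$). If $n_2^w = 0$, then $4$ divides $n_2^v$.
   Context: $K_{n,n}$ is the complete bipartite graph with vertex sets $V$, $W$ of $n$ vertices each; every vertex of $V$ is adjacent to every vertex of $W$, and there are no other edges. $S^3$ is the unit sphere in $\mathbb{R}^4$, on which $\mathrm{SO}(4)$ acts by isometries. "$G$ is induced on $\Gamma$ by an isomorphic subgroup $\widehat{G} \leq \mathrm{SO}(4)$" means every element of $\widehat{G}$ leaves $\Gamma$ setwise invariant, and restricting to $\Gamma$ gives an isomorphism from $\widehat{G}$ onto $G$. *)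

theory Defs
  imports "HOL-Analysis.Analysis" "HOL-Algebra.Sym_Groups"
begin

type_synonym vert = "nat + nat"

definition Vset :: "nat \<Rightarrow> vert set" where "Vset n = Inl ` {..<n}"
definition Wset :: "nat \<Rightarrow> vert set" where "Wset n = Inr ` {..<n}"
definition verts :: "nat \<Rightarrow> vert set" where "verts n = Vset n \<union> Wset n"

definition Kadj :: "nat \<Rightarrow> vert \<Rightarrow> vert \<Rightarrow> bool" where
  "Kadj n x y \<longleftrightarrow> (x \<in> Vset n \<and> y \<in> Wset n) \<or> (x \<in> Wset n \<and> y \<in> Vset n)"

definition Aut_K :: "nat \<Rightarrow> (vert \<Rightarrow> vert) set" where
  "Aut_K n = {f. bij_betw f (verts n) (verts n) \<and> (\<forall>x. x \<notin> verts n \<longrightarrow> f x = x)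
      \<and> (\<forall>x\<in>verts n. \<forall>y\<in>verts n. Kadj n (f x) (f y) \<longleftrightarrow> Kadj n x y)}"

definition AutK_group :: "nat \<Rightarrow> (vert \<Rightarrow> vert) monoid" where
  "AutK_group n = \<lparr>carrier = Aut_K n, mult = (\<circ>), one = id\<rparr>"

definition SO4 :: "(real^4^4) set" where
  "SO4 = {A. orthogonal_matrix A \<and> det A = 1}"

definition SO4_group :: "(real^4^4) monoid" where
  "SO4_group = \<lparr>carrier = SO4, mult = (**), one = mat 1\<rparr>"

definition K_embedding :: "nat \<Rightarrow> (vert \<Rightarrow> real^4) \<Rightarrow> (vert \<Rightarrow> vert \<Rightarrow> real \<Rightarrow> real^4) \<Rightarrow> bool" where
  "K_embedding n p \<gamma> \<longleftrightarrow>
     inj_on p (verts n) \<and> p ` verts n \<subseteq> sphere 0 1 \<and>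
     (\<forall>v\<in>Vset n. \<forall>w\<in>Wset n.
        arc (\<gamma> v w) \<and> pathstart (\<gamma> v w) = p v \<and> pathfinish (\<gamma> v w) = p w \<and>
        path_image (\<gamma> v w) \<subseteq> sphere 0 1 \<and>
        (\<forall>u\<in>verts n. p u \<in> path_image (\<gamma> v w) \<longrightarrow> u = v \<or> u = w) \<and>
        (\<forall>v'\<in>Vset n. \<forall>w'\<in>Wset n. (v, w) \<noteq> (v', w') \<longrightarrow>
            path_image (\<gamma> v w) \<inter> path_image (\<gamma> v' w') \<subseteq> p ` ({v, w} \<inter> {v', w'})))"

definition graph_image :: "nat \<Rightarrow> (vert \<Rightarrow> real^4) \<Rightarrow> (vert \<Rightarrow> vert \<Rightarrow> real \<Rightarrow> real^4) \<Rightarrow> (real^4) set" where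
  "graph_image n p \<gamma> = p ` verts n \<union> (\<Union>v\<in>Vset n. \<Union>w\<in>Wset n. path_image (\<gamma> v w))"

text \<open>Image of the edge {x,y} (unordered).\<close>
definition edge_img :: "nat \<Rightarrow> (vert \<Rightarrow> vert \<Rightarrow> real \<Rightarrow> real^4) \<Rightarrow> vert \<Rightarrow> vert \<Rightarrow> (real^4) set" where
  "edge_img n \<gamma> x y = (if x \<in> Vset n then path_image (\<gamma> x y) else path_image (\<gamma> y x))"

definition induced_by :: "nat \<Rightarrow> (vert \<Rightarrow> real^4) \<Rightarrow> (vert \<Rightarrow> vert \<Rightarrow> real \<Rightarrow> real^4)
    \<Rightarrow> (real^4^4) set \<Rightarrow> (vert \<Rightarrow> vert) set \<Rightarrow> (real^4^4 \<Rightarrow> vert \<Rightarrow> vert) \<Rightarrow> bool" where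
  "induced_by n p \<gamma> Gh G \<phi> \<longleftrightarrow>
     \<phi> \<in> iso (SO4_group\<lparr>carrier := Gh\<rparr>) (AutK_group n\<lparr>carrier := G\<rparr>) \<and>
     (\<forall>A\<in>Gh.
        (\<lambda>x. A *v x) ` graph_image n p \<gamma> = graph_image n p \<gamma> \<and>
        (\<forall>u\<in>verts n. A *v p u = p (\<phi> A u)) \<and>
        (\<forall>v\<in>Vset n. \<forall>w\<in>Wset n.
            (\<lambda>x. A *v x) ` path_image (\<gamma> v w) = edge_img n \<gamma> (\<phi> A v) (\<phi> A w)))"

end

theory Submission
  imports Defs
begin

text \<open>
  The three involutions of \<open>A\<^sub>4\<close> form, with the identity, a Klein four-group \<open>K\<close>, and an
  element \<open>t\<close> of order 3 permutes them cyclically by conjugation: they are \<open>g\<close>,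
  \<open>b = t g t\<^sup>-\<^sup>1\<close> and \<open>g b = t\<^sup>-\<^sup>1 g t\<close>. An automorphism of order 3 of \<open>K\<^sub>n\<^sub>,\<^sub>n\<close>
  cannot swap the sides, so on each side all three involutions have the same number of fixed
  points. If \<open>g\<close> fixes no vertex of \<open>W\<close>, then \<open>K\<close> acts freely on \<open>W\<close> and \<open>4\<close> divides \<open>n\<close>.
  On \<open>V\<close> a counting argument over the \<open>K\<close>-orbits, together with the parity of the fixed points
  of \<open>b\<close> on the fixed set of \<open>g\<close>, then shows that \<open>4\<close> divides the number of fixed points
  of \<open>g\<close>.
\<close>

section \<open>Commuting involutions\<close>

lemma dvd_card_if_orbits:
  assumes "finite X"
    and "\<And>x. x \<in> X \<Longrightarrow> x \<in> orb x" "\<And>x. x \<in> X \<Longrightarrow> orb x \<subseteq> X"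
    and "\<And>x y. x \<in> X \<Longrightarrow> y \<in> orb x \<Longrightarrow> orb y = orb x"
    and "\<And>x. x \<in> X \<Longrightarrow> card (orb x) = k"
  shows "k dvd card X"
proof -
  have "\<Union> (orb ` X) = X"
    using assms(2,3) by blast
  moreover have "k * card (orb ` X) = card (\<Union> (orb ` X))"
  proof (rule card_partition)
    show "finite (orb ` X)"
      using assms(1) by simp
    show "finite (\<Union> (orb ` X))"
      using assms(1,3) by (meson UN_least finite_subset)
    show "c1 \<inter> c2 = {}" if c: "c1 \<in> orb ` X" "c2 \<in> orb ` X" "c1 \<noteq> c2" for c1 c2
    proof -
      obtain x y where "x \<in> X" "y \<in> X" "c1 = orb x" "c2 = orb y"
        using c(1,2) by blast
      then show ?thesis
        using assms(4)[of x] assms(4)[of y] c(3) by blast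
    qed
  qed (use assms(5) in auto)
  ultimately show ?thesis
    by (metis dvd_triv_left)
qed

lemma even_card_if_involution_without_fixpoints:
  assumes "finite X" "\<And>x. x \<in> X \<Longrightarrow> s x \<in> X" "\<And>x. x \<in> X \<Longrightarrow> s (s x) = x"
    and "\<And>x. x \<in> X \<Longrightarrow> s x \<noteq> x"
  shows "even (card X)"
  using assms(1)
proof (rule dvd_card_if_orbits[where orb = "\<lambda>x. {x, s x}"])
  show "{y, s y} = {x, s x}" if "x \<in> X" "y \<in> {x, s x}" for x y
    using that assms(3) by auto
next
  show "card {x, s x} = 2" if "x \<in> X" for x
    using assms(4)[OF that] by simp
qed (use assms(2) in auto)

lemma even_card_fixpoints_involution_iff:
  assumes "finite X" "\<And>x. x \<in> X \<Longrightarrow> s x \<in> X" "\<And>x. x \<in> X \<Longrightarrow> s (s x) = x"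
  shows "even (card {x \<in> X. s x = x}) \<longleftrightarrow> even (card X)"
proof -
  let ?F = "{x \<in> X. s x = x}" and ?M = "{x \<in> X. s x \<noteq> x}"
  have "even (card ?M)"
  proof (rule even_card_if_involution_without_fixpoints)
    show "s x \<in> ?M" if "x \<in> ?M" for x
      using that assms(2,3) by (metis (mono_tags, lifting) mem_Collect_eq)
  qed (use assms in auto)
  moreover have "card X = card ?F + card ?M"
    using assms(1) by (subst card_Un_disjoint[symmetric]) (auto intro: arg_cong[where f = card])
  ultimately show ?thesis
    by simp
qed

lemma card_fixpoints_conjugate:
  assumes "\<And>x. x \<in> S \<Longrightarrow> t x \<in> S" "\<And>x. x \<in> S \<Longrightarrow> t' x \<in> S" "\<And>x. x \<in> S \<Longrightarrow> h x \<in> S"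
    and "\<And>x. x \<in> S \<Longrightarrow> t (t' x) = x" "\<And>x. x \<in> S \<Longrightarrow> t' (t x) = x"
  shows "card {x \<in> S. t (h (t' x)) = x} = card {x \<in> S. h x = x}"
proof -
  have "bij_betw t {x \<in> S. h x = x} {x \<in> S. t (h (t' x)) = x}"
  proof (rule bij_betw_byWitness[where f' = t'])
    show "t ` {x \<in> S. h x = x} \<subseteq> {x \<in> S. t (h (t' x)) = x}"
      using assms(1,5) by auto
    show "t' ` {x \<in> S. t (h (t' x)) = x} \<subseteq> {x \<in> S. h x = x}"
      using assms(2,3,5) by (auto, metis)
  qed (use assms(4,5) in auto)
  then show ?thesis
    by (simp add: bij_betw_same_card)
qed

locale commuting_involutions =
  fixes X :: "'a set" and a b :: "'a \<Rightarrow> 'a"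
  assumes a_closed: "x \<in> X \<Longrightarrow> a x \<in> X" and b_closed: "x \<in> X \<Longrightarrow> b x \<in> X"
    and a_a: "x \<in> X \<Longrightarrow> a (a x) = x" and b_b: "x \<in> X \<Longrightarrow> b (b x) = x"
    and a_b_commute: "x \<in> X \<Longrightarrow> a (b x) = b (a x)"
begin

lemma b_a_commute: "x \<in> X \<Longrightarrow> b (a x) = a (b x)"
  by (simp add: a_b_commute)

lemmas involution_simps = a_closed b_closed a_a b_b b_a_commute

lemma four_dvd_card_free_subset:
  assumes "finite Y" "Y \<subseteq> X" "\<And>y. y \<in> Y \<Longrightarrow> a y \<in> Y" "\<And>y. y \<in> Y \<Longrightarrow> b y \<in> Y"
    and "\<And>y. y \<in> Y \<Longrightarrow> a y \<noteq> y" "\<And>y. y \<in> Y \<Longrightarrow> b y \<noteq> y" "\<And>y. y \<in> Y \<Longrightarrow> a (b y) \<noteq> y"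
  shows "4 dvd card Y"
  using assms(1)
proof (rule dvd_card_if_orbits[where orb = "\<lambda>y. {y, a y, b y, a (b y)}"])
  fix x y
  assume "x \<in> Y" "y \<in> {x, a x, b x, a (b x)}"
  moreover have "x \<in> X"
    using assms(2) \<open>x \<in> Y\<close> by blast
  ultimately show "{y, a y, b y, a (b y)} = {x, a x, b x, a (b x)}"
    by (auto simp: involution_simps)
next
  fix x
  assume x: "x \<in> Y"
  then have "x \<in> X" "b x \<in> Y"
    using assms(2,4) by blast+
  then have "a x \<noteq> b x" "a x \<noteq> a (b x)" "b x \<noteq> a (b x)"
    using assms(5-7) x by (metis involution_simps)+
  moreover have "x \<noteq> a x" "x \<noteq> b x" "x \<noteq> a (b x)"
    using assms(5-7)[OF x] by auto
  ultimately show "card {x, a x, b x, a (b x)} = 4"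
    by simp
qed (use assms(3,4) in auto)

lemma four_dvd_card_fixpoints:
  assumes "finite X" "4 dvd card X"
    and "card {x \<in> X. b x = x} = card {x \<in> X. a x = x}"
    and "card {x \<in> X. a (b x) = x} = card {x \<in> X. a x = x}"
  shows "4 dvd card {x \<in> X. a x = x}"
proof -
  define A where "A = {x \<in> X. a x = x}"
  define B where "B = {x \<in> X. b x = x}"
  define C where "C = {x \<in> X. a (b x) = x}"
  define R where "R = {x \<in> X. a x \<noteq> x \<and> b x \<noteq> x \<and> a (b x) \<noteq> x}"
  define D where "D = {x \<in> A. b x = x}"
  \<comment> \<open>\<open>R\<close> is the part of \<open>X\<close> where the group acts freely; the pairwise intersections of
    \<open>A\<close>, \<open>B\<close>, \<open>C\<close> all equal the common fixed set \<open>D\<close>, so \<open>|X| + 2|D| = |R| + 3|A|\<close>, and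
    \<open>|D| \<equiv> |A| (mod 2)\<close> because \<open>b\<close> is an involution of \<open>A\<close> with fixed set \<open>D\<close>.\<close>
  have fin: "finite A" "finite B" "finite C" "finite R"
    using assms(1) by (auto simp: A_def B_def C_def R_def)
  have "4 dvd card R"
  proof (rule four_dvd_card_free_subset)
    show "a y \<in> R" "b y \<in> R" if "y \<in> R" for y
      using that unfolding R_def by (auto simp: involution_simps) (metis involution_simps)+
  qed (use fin(4) in \<open>auto simp: R_def\<close>)
  have "A \<inter> B = D" "(A \<union> B) \<inter> C = D"
    by (auto simp: A_def B_def C_def D_def involution_simps) (metis involution_simps)+
  moreover have "X = R \<union> (A \<union> B \<union> C)" "R \<inter> (A \<union> B \<union> C) = {}"
    by (auto simp: A_def B_def C_def R_def)
  ultimately have "card X + 2 * card D = card R + card A + card B + card C"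
    using fin card_Un_Int[of A B] card_Un_Int[of "A \<union> B" C] card_Un_disjoint[of R "A \<union> B \<union> C"]
    by simp
  moreover have "even (card D) \<longleftrightarrow> even (card A)"
    unfolding D_def
    by (rule even_card_fixpoints_involution_iff) (use fin b_closed b_b a_b_commute in \<open>auto simp: A_def\<close>)
  moreover have "card B = card A" "card C = card A"
    using assms(3,4) by (simp_all add: A_def B_def C_def)
  ultimately have "4 dvd card A"
    using assms(2) \<open>4 dvd card R\<close> by presburger
  then show ?thesis
    by (simp add: A_def)
qed

end

lemma commuting_involutions_rotation:
  fixes g t :: "'a \<Rightarrow> 'a"
  assumes "g \<circ> g = id" "t \<circ> t \<circ> t = id" "g \<circ> t \<circ> g \<circ> t \<circ> t = t \<circ> t \<circ> g \<circ> t"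
    and "\<And>x. x \<in> S \<Longrightarrow> g x \<in> S" "\<And>x. x \<in> S \<Longrightarrow> t x \<in> S"
    and b_def: "b = t \<circ> g \<circ> t \<circ> t"
  shows "commuting_involutions S g b"
    and "card {x \<in> S. b x = x} = card {x \<in> S. g x = x}"
    and "card {x \<in> S. g (b x) = x} = card {x \<in> S. g x = x}"
proof -
  have g: "g (g x) = x" and t: "t (t (t x)) = x" and gb: "g (b x) = t (t (g (t x)))" for x
    using assms(1-3) unfolding b_def by (metis comp_apply id_apply)+
  have b: "b (b x) = x" for x
    by (simp add: b_def g t)
  show "commuting_involutions S g b"
  proof
    have gb_gb: "g (b (g (b y))) = y" for y
      by (simp add: gb g t)
    show "g (b x) = b (g x)" for x
      using gb_gb[of "b (g x)"] by (simp add: b g)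
  qed (use assms(4,5) g b in \<open>auto simp: b_def\<close>)
  show "card {x \<in> S. b x = x} = card {x \<in> S. g x = x}"
    using card_fixpoints_conjugate[of S t "t \<circ> t" g] assms(4,5) t by (simp add: b_def)
  show "card {x \<in> S. g (b x) = x} = card {x \<in> S. g x = x}"
    using card_fixpoints_conjugate[of S "t \<circ> t" t g] assms(4,5) t by (simp add: gb)
qed

lemma four_dvd_card_fixpoints_rotation:
  fixes g t :: "'a \<Rightarrow> 'a"
  assumes rel: "g \<circ> g = id" "t \<circ> t \<circ> t = id" "g \<circ> t \<circ> g \<circ> t \<circ> t = t \<circ> t \<circ> g \<circ> t"
    and fin: "finite V" "finite W" "card V = card W"
    and V: "\<And>x. x \<in> V \<Longrightarrow> g x \<in> V" "\<And>x. x \<in> V \<Longrightarrow> t x \<in> V"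
    and W: "\<And>x. x \<in> W \<Longrightarrow> g x \<in> W" "\<And>x. x \<in> W \<Longrightarrow> t x \<in> W"
    and W_free: "\<And>w. w \<in> W \<Longrightarrow> g w \<noteq> w"
  shows "4 dvd card {v \<in> V. g v = v}"
proof -
  define b where "b = t \<circ> g \<circ> t \<circ> t"
  note rotation_V = commuting_involutions_rotation[OF rel V b_def]
  note rotation_W = commuting_involutions_rotation[OF rel W b_def]
  interpret V: commuting_involutions V g b
    by (rule rotation_V(1))
  interpret W: commuting_involutions W g b
    by (rule rotation_W(1))
  have W_fixed: "{w \<in> W. g w = w} = {}"
    using W_free by blast
  have "card {w \<in> W. b w = w} = 0" "card {w \<in> W. g (b w) = w} = 0"
    using rotation_W(2,3) unfolding W_fixed by simp_all
  then have W_free_conj: "b w \<noteq> w" "g (b w) \<noteq> w" if "w \<in> W" for w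
    using fin(2) that by auto
  have "4 dvd card W"
    by (rule W.four_dvd_card_free_subset) (use fin(2) W_free W_free_conj W.a_closed W.b_closed in auto)
  then show ?thesis
    using fin(1,3) rotation_V(2,3) by (intro V.four_dvd_card_fixpoints) simp_all
qed

section \<open>Involutions of the alternating group on four letters\<close>

lemma permutes_eqI:
  assumes "f permutes S" "g permutes S" "\<And>x. x \<in> S \<Longrightarrow> f x = g x"
  shows "f = g"
  using assms by (metis permutes_not_in ext)

lemma alt_group_4_involution_values:
  assumes "g \<in> carrier (alt_group 4)" "g \<noteq> id" "g \<circ> g = id"
  shows "(g 1, g 2, g 3, g 4) \<in> {(2, 1, 4, 3), (3, 4, 1, 2), (4, 3, 2, 1)}"
proof -
  have perm: "g permutes {1..4}" and even: "evenperm g"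
    using assms(1) by (auto simp: alt_group_carrier)
  have four: "{1..4::nat} = {1, 2, 3, 4}"
    by auto
  have differs: "\<not> (\<forall>x\<in>{1, 2, 3, 4}. g x = h x)" if "h permutes {1..4}" "g \<noteq> h" for h
    using permutes_eqI[OF perm that(1)] that(2) unfolding four by blast
  have not_transpose: "\<not> (\<forall>x\<in>{1, 2, 3, 4}. g x = Transposition.transpose i j x)"
    if "i \<in> {1..4}" "j \<in> {1..4}" "i \<noteq> j" for i j
  proof -
    have "g \<noteq> Transposition.transpose i j"
      using even that(3) by (auto simp: evenperm_swap)
    then show ?thesis
      using differs[OF permutes_swap_id[OF that(1,2)]] by blast
  qed
  have range: "g i \<in> {1, 2, 3, 4}" if "i \<in> {1, 2, 3, 4}" for i
    using permutes_in_image[OF perm, of i] that unfolding four by blast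
  have inj: "g i \<noteq> g j" if "i \<noteq> j" for i j
    using permutes_inj[OF perm] that by (auto dest: injD)
  have invol: "g (g i) = i" for i
    using assms(3) by (metis comp_apply id_apply)
  show ?thesis
    using differs[OF permutes_id assms(2)]
      not_transpose[of 1 2] not_transpose[of 1 3] not_transpose[of 1 4]
      not_transpose[of 2 3] not_transpose[of 2 4] not_transpose[of 3 4]
      range[of 1] range[of 2] range[of 3] range[of 4]
      inj[of 1 2] inj[of 1 3] inj[of 1 4] inj[of 2 3] inj[of 2 4] inj[of 3 4]
      invol[of 1] invol[of 2] invol[of 3] invol[of 4]
    by (simp add: Transposition.transpose_def) (elim disjE; simp)
qed

text \<open>Since \<open>c\<^sup>-\<^sup>1 = c \<circ> c\<close>, the relation says \<open>g \<circ> (c g c\<^sup>-\<^sup>1) = c\<^sup>-\<^sup>1 g c\<close>: conjugation by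
  the 3-cycle permutes the three involutions cyclically.\<close>

lemma alt_group_4_involution_rotation:
  assumes "g \<in> carrier (alt_group 4)" "g \<noteq> id" "g \<circ> g = id"
  defines "c \<equiv> cycle_of_list [1, 2, 3]"
  shows "g \<circ> c \<circ> g \<circ> c \<circ> c = c \<circ> c \<circ> g \<circ> c"
proof (rule permutes_eqI)
  have "c permutes {1..4}"
    unfolding c_def by (auto intro!: permutes_compose permutes_swap_id)
  moreover have "g permutes {1..4}"
    using assms(1) by (simp add: alt_group_carrier)
  ultimately show "g \<circ> c \<circ> g \<circ> c \<circ> c permutes {1..4}" "c \<circ> c \<circ> g \<circ> c permutes {1..4}"
    by (auto intro!: permutes_compose)
  fix x :: nat
  assume "x \<in> {1..4}"
  then have "x = 1 \<or> x = 2 \<or> x = 3 \<or> x = 4"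
    by auto
  then show "(g \<circ> c \<circ> g \<circ> c \<circ> c) x = (c \<circ> c \<circ> g \<circ> c) x"
    using alt_group_4_involution_values[OF assms(1-3)]
    by (elim disjE; simp add: c_def Transposition.transpose_def; elim disjE; simp)
qed

lemma three_cycle_cube:
  "cycle_of_list [1, 2, 3] \<circ> cycle_of_list [1, 2, 3] \<circ> cycle_of_list [1, 2, 3] = (id :: nat \<Rightarrow> nat)"
  (is "?c \<circ> ?c \<circ> ?c = id")
proof (rule permutes_eqI)
  have "?c permutes {1..3}"
    by (auto intro!: permutes_compose permutes_swap_id)
  then show "?c \<circ> ?c \<circ> ?c permutes {1..3}"
    by (intro permutes_compose)
  fix x :: nat
  assume "x \<in> {1..3}"
  then have "x = 1 \<or> x = 2 \<or> x = 3"
    by auto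
  then show "(?c \<circ> ?c \<circ> ?c) x = id x"
    by (elim disjE) (simp_all add: Transposition.transpose_def)
qed simp

lemma (in monoid) iso_alt_group_4_involution_rotation:
  assumes "G \<cong> alt_group 4" "g \<in> carrier G" "g \<noteq> \<one>" "g \<otimes> g = \<one>"
  obtains t where "t \<in> carrier G" "t \<otimes> t \<otimes> t = \<one>" "g \<otimes> t \<otimes> g \<otimes> t \<otimes> t = t \<otimes> t \<otimes> g \<otimes> t"
proof -
  obtain \<psi> where \<psi>: "\<psi> \<in> hom G (alt_group 4)" "\<psi> ` carrier G = carrier (alt_group 4)"
    "inj_on \<psi> (carrier G)"
    using assms(1) by (auto simp: is_iso_def iso_iff)
  have mult: "\<psi> (x \<otimes> y) = \<psi> x \<circ> \<psi> y" if "x \<in> carrier G" "y \<in> carrier G" for x y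
    using hom_mult[OF \<psi>(1) that] by (simp add: alt_group_mult)
  have closed: "\<psi> x \<in> carrier (alt_group 4)" if "x \<in> carrier G" for x
    using \<psi>(2) that by blast
  have eq: "x = y" if "x \<in> carrier G" "y \<in> carrier G" "\<psi> x = \<psi> y" for x y
    using \<psi>(3) that by (auto dest: inj_onD)
  have one: "\<psi> \<one> = id"
  proof -
    have "inj (\<psi> \<one>)"
      using closed[OF one_closed] by (auto simp: alt_group_carrier permutes_inj)
    moreover have "\<psi> \<one> \<circ> \<psi> \<one> = \<psi> \<one> \<circ> id"
      using mult[of \<one> \<one>] by simp
    ultimately show ?thesis
      by (metis fun.inj_map_strong inj_eq)
  qed
  define c :: "nat \<Rightarrow> nat" where "c = cycle_of_list [1, 2, 3]"
  have "c \<in> three_cycles 4"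
    unfolding c_def by (rule CollectI, rule exI[of _ "[1, 2, 3]"]) simp
  then have "c \<in> \<psi> ` carrier G"
    using \<psi>(2) subsetD[OF three_cycles_incl] by simp
  then obtain t where t: "t \<in> carrier G" "\<psi> t = c"
    by (rule imageE) simp
  have "\<psi> g \<noteq> id"
    using eq[of g \<one>] assms(2,3) one by auto
  moreover have "\<psi> g \<circ> \<psi> g = id"
    using mult[of g g] assms(2,4) one by simp
  ultimately have "\<psi> g \<circ> c \<circ> \<psi> g \<circ> c \<circ> c = c \<circ> c \<circ> \<psi> g \<circ> c"
    unfolding c_def using closed[OF assms(2)] by (rule alt_group_4_involution_rotation[rotated])
  then have "g \<otimes> t \<otimes> g \<otimes> t \<otimes> t = t \<otimes> t \<otimes> g \<otimes> t"
    using t assms(2) by (intro eq) (simp_all add: mult)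
  moreover have "t \<otimes> t \<otimes> t = \<one>"
  proof (rule eq)
    show "\<psi> (t \<otimes> t \<otimes> t) = \<psi> \<one>"
      using t three_cycle_cube by (simp add: c_def mult one)
  qed (use t in simp_all)
  ultimately show thesis
    using that t(1) by blast
qed

section \<open>Automorphisms of \<open>K\<^sub>n\<^sub>,\<^sub>n\<close>\<close>

lemma Kadj_iff:
  assumes "x \<in> verts n" "y \<in> verts n"
  shows "Kadj n x y \<longleftrightarrow> (x \<in> Vset n \<longleftrightarrow> y \<notin> Vset n)"
  using assms by (auto simp: Kadj_def verts_def Vset_def Wset_def)

lemma Aut_K_in_verts: "f \<in> Aut_K n \<Longrightarrow> x \<in> verts n \<Longrightarrow> f x \<in> verts n"
  by (auto simp: Aut_K_def dest: bij_betwE)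

lemma Aut_K_same_side_iff:
  assumes "f \<in> Aut_K n" "x \<in> verts n" "y \<in> verts n"
  shows "(f x \<in> Vset n \<longleftrightarrow> f y \<in> Vset n) \<longleftrightarrow> (x \<in> Vset n \<longleftrightarrow> y \<in> Vset n)"
proof -
  have "Kadj n (f x) (f y) \<longleftrightarrow> Kadj n x y"
    using assms by (simp add: Aut_K_def)
  then show ?thesis
    using assms by (simp add: Kadj_iff Aut_K_in_verts) blast
qed

lemma Wset_eq: "Wset n = verts n - Vset n"
  by (auto simp: verts_def Vset_def Wset_def)

lemma Aut_K_preserves_sides:
  assumes "f \<in> Aut_K n" "v \<in> Vset n" "f v \<in> Vset n"
  shows "x \<in> Vset n \<Longrightarrow> f x \<in> Vset n" and "x \<in> Wset n \<Longrightarrow> f x \<in> Wset n"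
proof -
  have v: "v \<in> verts n"
    using assms(2) by (simp add: verts_def)
  show "f x \<in> Vset n" if "x \<in> Vset n"
    using Aut_K_same_side_iff[OF assms(1) _ v, of x] that assms(2,3) by (simp add: verts_def)
  show "f x \<in> Wset n" if "x \<in> Wset n"
    using Aut_K_same_side_iff[OF assms(1) _ v, of x] that assms(2,3) Aut_K_in_verts[OF assms(1)]
    by (simp add: Wset_eq)
qed

lemma Aut_K_order_3_preserves_Vset:
  assumes "f \<in> Aut_K n" "f \<circ> f \<circ> f = id" "v \<in> Vset n"
  shows "f v \<in> Vset n"
proof (rule ccontr)
  assume "f v \<notin> Vset n"
  have v: "v \<in> verts n"
    using assms(3) by (simp add: verts_def)
  have swap: "f x \<in> Vset n \<longleftrightarrow> x \<notin> Vset n" if "x \<in> verts n" for x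
    using Aut_K_same_side_iff[OF assms(1) that v] assms(3) \<open>f v \<notin> Vset n\<close> by blast
  have "f (f (f v)) \<notin> Vset n"
    using swap v \<open>f v \<notin> Vset n\<close> Aut_K_in_verts[OF assms(1)] by auto
  moreover have "f (f (f v)) = v"
    using assms(2) by (metis comp_apply id_apply)
  ultimately show False
    using assms(3) by simp
qed

lemma monoid_AutK_group_subgroup:
  assumes "subgroup G (AutK_group n)"
  shows "monoid (AutK_group n\<lparr>carrier := G\<rparr>)"
  using subgroup.m_closed[OF assms] subgroup.one_closed[OF assms]
  by (intro monoidI) (auto simp: AutK_group_def)

lemma AutK_subgroup_alt_group_4_rotation:
  assumes "subgroup G (AutK_group n)" "AutK_group n\<lparr>carrier := G\<rparr> \<cong> alt_group 4"
    and "g \<in> G" "g \<noteq> id" "g \<circ> g = id"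
  obtains t where "t \<in> G" "t \<circ> t \<circ> t = id" "g \<circ> t \<circ> g \<circ> t \<circ> t = t \<circ> t \<circ> g \<circ> t"
  using monoid.iso_alt_group_4_involution_rotation[OF monoid_AutK_group_subgroup[OF assms(1)] assms(2), of g]
    assms(3-5) that
  by (auto simp: AutK_group_def)

theorem lemma5:
  fixes n :: nat and G :: "(vert \<Rightarrow> vert) set"
  assumes "subgroup G (AutK_group n)"
    and "AutK_group n\<lparr>carrier := G\<rparr> \<cong> alt_group 4"
    and "\<exists>p \<gamma> Gh \<phi>. K_embedding n p \<gamma> \<and> subgroup Gh SO4_group \<and> induced_by n p \<gamma> Gh G \<phi>"
  shows "\<forall>g\<in>G. (g \<noteq> id \<and> g \<circ> g = id) \<longrightarrow>
           card {w\<in>Wset n. g w = w} = 0 \<longrightarrow> 4 dvd card {v\<in>Vset n. g v = v}"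
proof (intro ballI impI, elim conjE)
  fix g
  assume g: "g \<in> G" "g \<noteq> id" "g \<circ> g = id" and W_free: "card {w \<in> Wset n. g w = w} = 0"
  show "4 dvd card {v \<in> Vset n. g v = v}"
  proof (cases "\<exists>v \<in> Vset n. g v = v")
    case False
    then have "{v \<in> Vset n. g v = v} = {}"
      by blast
    then show ?thesis
      by (metis card.empty dvd_0_right)
  next
    case True
    then obtain v where v: "v \<in> Vset n" "g v = v"
      by blast
    obtain t where t: "t \<in> G" "t \<circ> t \<circ> t = id" "g \<circ> t \<circ> g \<circ> t \<circ> t = t \<circ> t \<circ> g \<circ> t"
      using AutK_subgroup_alt_group_4_rotation[OF assms(1,2) g] .
    have "t \<in> Aut_K n" "g \<in> Aut_K n"
      using subgroup.subset[OF assms(1)] t(1) g(1) by (auto simp: AutK_group_def)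
    note t_sides = Aut_K_preserves_sides[OF this(1) v(1) Aut_K_order_3_preserves_Vset[OF this(1) t(2) v(1)]]
      and g_sides = Aut_K_preserves_sides[OF this(2) v(1)]
    show ?thesis
    proof (rule four_dvd_card_fixpoints_rotation[OF g(3) t(2,3)])
      show "finite (Vset n)" "finite (Wset n)" "card (Vset n) = card (Wset n)"
        by (auto simp: Vset_def Wset_def card_image)
      then show "g w \<noteq> w" if "w \<in> Wset n" for w
        using W_free that by auto
    qed (use t_sides g_sides v in auto)
  qed
qed

end
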